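(* Let $(X,\tau)$ and $(Y,\sigma)$ be fuzzifying topological spaces and $f:X\to Y$ surjective. Then $$\max\big(0,\ L_PC(X,\tau)+I_P(f)+O_P(f)-2\big)\le L_PC(Y,\sigma),$$ i.e. $\vDash L_PC(X,\tau)\otimes I_P(f)\otimes O_P(f)\to L_PC(Y,\sigma)$.
   Context: Łukasiewicz: $[\varphi\otimes\psi]=\max(0,[\varphi]+[\psi]-1)$, $[\varphi\to\psi]=\min(1,1-[\varphi]+[\psi])$. A fuzzifying topology on $Z$ is $\tau:P(Z)\to[0,1]$ with $\tau(Z)=1$, $\tau(A\cap B)\ge\min$, $\tau(\bigcup A_\lambda)\ge\inf\tau(A_\lambda)$. $N_x(A)=\sup_{x\in B\subseteq A}\tau(B)$; $Cl(A)(x)=1-N_x(Z\setminus A)$; for $\mu:Z\to[0,1]$, $Int(\mu)(x)=\sup_{x\in B}\min(\tau(B),\inf_{y\in B}\mu(y))$; pre-open degrees $\tau_P(A)=\inf_{x\in A}Int(Cl(A))(x)$ (similarly $\sigma_P$ on $Y$); $N^P_x(A)=\sup_{x\in B\subseteq A}\tau_P(B)$. For $G\subseteq Z$: $(\tau_P/G)(B)=\sup\{\tau_P(V):V\cap G=B\}$. Compactness degree of $G$ w.r.t. $\eta:P(G)\to[0,1]$: with $K(\Re,G)=\inf_{x\in G}\sup_{B\ni x}\Re(B)$, $[\Re\subseteq\eta]=\inf_B\min(1,1-\Re(B)+\eta(B))$, $\wp\le\Re$ pointwise, $FF(\wp)=1-\inf\{\delta\in[0,1]:\{B:\wp(B)>\delta\}\text{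 finite}\}$, $\Gamma(G,\eta)=\inf_{\Re}\min\big(1,1-\max(0,K(\Re,G)+[\Re\subseteq\eta]-1)+\sup_{\wp\le\Re}\max(0,K(\wp,G)+FF(\wp)-1)\big)$. Locally strong compactness $L_PC(Z,\tau)=\inf_{x\in Z}\sup_{B\subseteq Z}\max(0,N^P_x(B)+\Gamma(B,\tau_P/B)-1)$. Pre-irresoluteness $I_P(f)=\inf_{B\subseteq Y}\min(1,1-\sigma_P(B)+\tau_P(f^{-1}(B)))$; pre-openness $O_P(f)=\inf_{U\subseteq X}\min(1,1-\tau_P(U)+\sigma_P(f(U)))$. *)

theory Defs
  imports Main "HOL-Library.FuncSet" Complex_Main
begin

text \<open>Truth values are reals in [0,1]. Suprema/infima of subsets of [0,1],
  with the [0,1]-lattice conventions sup of empty = 0, inf of empty = 1.\<close>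

definition supI :: "real set \<Rightarrow> real" where
  "supI S = (if S = {} then 0 else Sup S)"

definition infI :: "real set \<Rightarrow> real" where
  "infI S = (if S = {} then 1 else Inf S)"

definition luk_and :: "real \<Rightarrow> real \<Rightarrow> real" where
  "luk_and a b = max 0 (a + b - 1)"

definition luk_imp :: "real \<Rightarrow> real \<Rightarrow> real" where
  "luk_imp a b = min 1 (1 - a + b)"

definition fuzzifying_topology :: "('a set \<Rightarrow> real) \<Rightarrow> bool" where
  "fuzzifying_topology \<tau> \<longleftrightarrow>
     (\<forall>A. 0 \<le> \<tau> A \<and> \<tau> A \<le> 1) \<and>
     \<tau> UNIV = 1 \<and>
     (\<forall>A B. \<tau> (A \<inter> B) \<ge> min (\<tau> A) (\<tau> B)) \<and>
     (\<forall>F. \<tau> (\<Union>F) \<ge> infI (\<tau> ` F))"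

definition fnbhd :: "('a set \<Rightarrow> real) \<Rightarrow> 'a \<Rightarrow> 'a set \<Rightarrow> real" where
  "fnbhd \<tau> x A = supI {\<tau> B | B. x \<in> B \<and> B \<subseteq> A}"

definition fcl :: "('a set \<Rightarrow> real) \<Rightarrow> 'a set \<Rightarrow> 'a \<Rightarrow> real" where
  "fcl \<tau> A x = 1 - fnbhd \<tau> x (- A)"

definition fint :: "('a set \<Rightarrow> real) \<Rightarrow> ('a \<Rightarrow> real) \<Rightarrow> 'a \<Rightarrow> real" where
  "fint \<tau> \<mu> x = supI {min (\<tau> B) (infI (\<mu> ` B)) | B. x \<in> B}"

definition preopen :: "('a set \<Rightarrow> real) \<Rightarrow> 'a set \<Rightarrow> real" where
  "preopen \<tau> A = infI ((\<lambda>x. fint \<tau> (fcl \<tau> A) x) ` A)"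

definition pnbhd :: "('a set \<Rightarrow> real) \<Rightarrow> 'a \<Rightarrow> 'a set \<Rightarrow> real" where
  "pnbhd \<tau> x A = supI {preopen \<tau> B | B. x \<in> B \<and> B \<subseteq> A}"

text \<open>Subspace family (tau_P / G)(B), meaningful for B \<subseteq> G.\<close>
definition subsp :: "('a set \<Rightarrow> real) \<Rightarrow> 'a set \<Rightarrow> 'a set \<Rightarrow> real" where
  "subsp \<eta> G B = supI {\<eta> V | V. V \<inter> G = B}"

text \<open>Fuzzy families on P(G): [0,1]-valued functions on subsets of G,
  canonically extended by 0 outside P(G).\<close>
definition ffam :: "'a set \<Rightarrow> ('a set \<Rightarrow> real) set" where
  "ffam G = {R. (\<forall>B. 0 \<le> R B \<and> R B \<le> 1) \<and> (\<forall>B. \<not> B \<subseteq> G \<longrightarrow> R B = 0)}"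

definition Kcov :: "('a set \<Rightarrow> real) \<Rightarrow> 'a set \<Rightarrow> real" where
  "Kcov R G = infI ((\<lambda>x. supI {R B | B. B \<subseteq> G \<and> x \<in> B}) ` G)"

definition fsub :: "('a set \<Rightarrow> real) \<Rightarrow> ('a set \<Rightarrow> real) \<Rightarrow> 'a set \<Rightarrow> real" where
  "fsub R \<eta> G = infI {luk_imp (R B) (\<eta> B) | B. B \<subseteq> G}"

definition FF :: "('a set \<Rightarrow> real) \<Rightarrow> 'a set \<Rightarrow> real" where
  "FF P G = 1 - infI {\<delta>. 0 \<le> \<delta> \<and> \<delta> \<le> 1 \<and> finite {B. B \<subseteq> G \<and> P B > \<delta>}}"

definition Gamma :: "'a set \<Rightarrow> ('a set \<Rightarrow> real) \<Rightarrow> real" where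
  "Gamma G \<eta> = infI {luk_imp (luk_and (Kcov R G) (fsub R \<eta> G))
                        (supI {luk_and (Kcov P G) (FF P G) | P. P \<in> ffam G \<and> (\<forall>B. P B \<le> R B)})
                     | R. R \<in> ffam G}"

definition LPC :: "('a set \<Rightarrow> real) \<Rightarrow> real" where
  "LPC \<tau> = infI (range (\<lambda>x. supI {luk_and (pnbhd \<tau> x B) (Gamma B (subsp (preopen \<tau>) B)) | B. True}))"

definition pre_irresolute :: "('a set \<Rightarrow> real) \<Rightarrow> ('b set \<Rightarrow> real) \<Rightarrow> ('a \<Rightarrow> 'b) \<Rightarrow> real" where
  "pre_irresolute \<tau> \<sigma> f = infI {luk_imp (preopen \<sigma> B) (preopen \<tau> (f -` B)) | B. True}"

definition pre_open_map :: "('a set \<Rightarrow> real) \<Rightarrow> ('b set \<Rightarrow> real) \<Rightarrow> ('a \<Rightarrow> 'b) \<Rightarrow> real" where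
  "pre_open_map \<tau> \<sigma> f = infI {luk_imp (preopen \<tau> U) (preopen \<sigma> (f ` U)) | U. True}"

end

theory Submission
  imports Defs
begin

text \<open>Pre-openness sends a pre-open neighbourhood C of x inside B to the pre-open neighbourhood
  f C of f x inside f B. For the compactness of f B, a fuzzy cover R of f B is pulled back
  to the cover A \<mapsto> sup {R D | f\<inverse> D \<inter> B = A} of B, which by pre-irresoluteness consists
  of pre-open sets of the subspace B to at least the same degree; a finite subcover of the
  pulled-back cover is then pushed forward to a finite subcover of R, finiteness being
  preserved because D \<mapsto> f\<inverse> D \<inter> B is injective on subsets of f B.\<close>

lemma supI_upper: "s \<in> S \<Longrightarrow> S \<subseteq> {0..1} \<Longrightarrow> s \<le> supI S"
  unfolding supI_def by (auto intro!: cSup_upper bdd_aboveI[where M=1])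

lemma supI_least: "(\<And>s. s \<in> S \<Longrightarrow> s \<le> c) \<Longrightarrow> 0 \<le> c \<Longrightarrow> supI S \<le> c"
  unfolding supI_def by (auto intro!: cSup_least)

lemma supI_unit:
  assumes "S \<subseteq> {0..1}"
  shows "supI S \<in> {0..1}"
proof (cases "S = {}")
  case False
  then obtain s where "s \<in> S" by blast
  then have "0 \<le> supI S" using assms supI_upper[of s S] by force
  moreover have "supI S \<le> 1" using assms by (intro supI_least) auto
  ultimately show ?thesis by simp
qed (simp add: supI_def)

lemma supI_mono:
  assumes "\<And>s. s \<in> S \<Longrightarrow> \<exists>t\<in>T. s \<le> t" and "T \<subseteq> {0..1}"
  shows "supI S \<le> supI T"
proof (rule supI_least)
  show "s \<le> supI T" if "s \<in> S" for s
    using assms that by (meson order_trans supI_upper)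
  show "0 \<le> supI T" using supI_unit[OF assms(2)] by simp
qed

lemma infI_lower: "s \<in> S \<Longrightarrow> S \<subseteq> {0..1} \<Longrightarrow> infI S \<le> s"
  unfolding infI_def by (auto intro!: cInf_lower bdd_belowI[where m=0])

lemma infI_greatest: "(\<And>s. s \<in> S \<Longrightarrow> c \<le> s) \<Longrightarrow> c \<le> 1 \<Longrightarrow> c \<le> infI S"
  unfolding infI_def by (auto intro!: cInf_greatest)

lemma infI_unit:
  assumes "S \<subseteq> {0..1}"
  shows "infI S \<in> {0..1}"
proof (cases "S = {}")
  case False
  then obtain s where "s \<in> S" by blast
  then have "infI S \<le> 1" using assms infI_lower[of s S] by force
  moreover have "0 \<le> infI S" using assms by (intro infI_greatest) auto
  ultimately show ?thesis by simp
qed (simp add: infI_def)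

lemma luk_and_unit: "a \<in> {0..1} \<Longrightarrow> b \<in> {0..1} \<Longrightarrow> luk_and a b \<in> {0..1}"
  by (simp add: luk_and_def)

lemma luk_imp_unit: "a \<in> {0..1} \<Longrightarrow> b \<in> {0..1} \<Longrightarrow> luk_imp a b \<in> {0..1}"
  by (simp add: luk_imp_def)

lemma luk_and_le_iff_le_luk_imp: "a \<le> 1 \<Longrightarrow> 0 \<le> t \<Longrightarrow> luk_and a b \<le> t \<longleftrightarrow> a \<le> luk_imp b t"
  by (auto simp: luk_and_def luk_imp_def)

lemma luk_and_commute: "luk_and a b = luk_and b a"
  by (simp add: luk_and_def add.commute)

lemma luk_and_mono: "a \<le> a' \<Longrightarrow> b \<le> b' \<Longrightarrow> luk_and a b \<le> luk_and a' b'"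
  by (simp add: luk_and_def)

lemma luk_and_assoc: "a \<le> 1 \<Longrightarrow> c \<le> 1 \<Longrightarrow> luk_and (luk_and a b) c = luk_and a (luk_and b c)"
  by (simp add: luk_and_def)

lemma luk_and_le_luk_imp_mono:
  fixes g c k k' s s' t t' :: real
  assumes "g \<le> luk_imp (luk_and k' s') t'" and "k \<le> k'" and "luk_and s c \<le> s'"
    and "t' \<le> t" and "0 \<le> t" and "g \<in> {0..1}" and "c \<in> {0..1}" and "k \<in> {0..1}" and "s \<in> {0..1}"
  shows "luk_and g c \<le> luk_imp (luk_and k s) t"
  using assms unfolding luk_and_def luk_imp_def by (simp add: max_def min_def split: if_splits)

lemma luk_and_interchange_le:
  fixes a b c d a' b' :: real
  assumes "luk_and a d \<le> a'" and "luk_and b c \<le> b'"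
    and "a \<in> {0..1}" and "b \<in> {0..1}" and "c \<in> {0..1}" and "d \<in> {0..1}"
  shows "luk_and (luk_and a b) (luk_and c d) \<le> luk_and a' b'"
  using assms unfolding luk_and_def by (simp add: max_def split: if_splits)

lemma luk_and_supI_le:
  assumes "S \<subseteq> {0..1}" and "\<And>a. a \<in> S \<Longrightarrow> luk_and a b \<le> t" and "0 \<le> t" and "b \<le> 1"
  shows "luk_and (supI S) b \<le> t"
proof -
  have "supI S \<le> luk_imp b t"
    using assms by (intro supI_least) (auto simp: luk_and_le_iff_le_luk_imp luk_imp_def subset_eq)
  then show ?thesis
    using assms supI_unit[OF assms(1)] by (simp add: luk_and_le_iff_le_luk_imp)
qed

lemma infI_luk_imp_unit:
  "(\<And>j. a j \<in> {0..1}) \<Longrightarrow> (\<And>j. b j \<in> {0..1}) \<Longrightarrow> infI {luk_imp (a j) (b j) | j. True} \<in> {0..1}"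
  by (rule infI_unit) (auto intro: luk_imp_unit)

lemma luk_and_infI_luk_imp_le:
  assumes "\<And>j. a j \<in> {0..1}" and "\<And>j. b j \<in> {0..1}"
  shows "luk_and (a i) (infI {luk_imp (a j) (b j) | j. True}) \<le> b i"
proof -
  have "infI {luk_imp (a j) (b j) | j. True} \<le> luk_imp (a i) (b i)"
    using assms by (intro infI_lower) (auto intro: luk_imp_unit)
  then show ?thesis using assms[of i] by (simp add: luk_and_def luk_imp_def)
qed

lemma ffam_unit: "R \<in> ffam G \<Longrightarrow> R B \<in> {0..1}"
  by (simp add: ffam_def)

lemma ffam_outside: "R \<in> ffam G \<Longrightarrow> \<not> B \<subseteq> G \<Longrightarrow> R B = 0"
  by (simp add: ffam_def)

lemma fnbhd_unit: "range \<eta> \<subseteq> {0..1} \<Longrightarrow> fnbhd \<eta> x A \<in> {0..1}"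
  unfolding fnbhd_def by (rule supI_unit) auto

lemma fcl_unit: "range \<tau> \<subseteq> {0..1} \<Longrightarrow> fcl \<tau> A x \<in> {0..1}"
  using fnbhd_unit[of \<tau> x "- A"] by (simp add: fcl_def)

lemma fint_unit:
  assumes "range \<tau> \<subseteq> {0..1}" and "range \<mu> \<subseteq> {0..1}"
  shows "fint \<tau> \<mu> x \<in> {0..1}"
proof -
  have "infI (\<mu> ` B) \<in> {0..1}" for B using assms(2) by (intro infI_unit) auto
  then show ?thesis
    unfolding fint_def using assms(1) by (intro supI_unit) (auto simp: min_def)
qed

lemma preopen_unit: "range \<tau> \<subseteq> {0..1} \<Longrightarrow> preopen \<tau> A \<in> {0..1}"
  unfolding preopen_def by (rule infI_unit) (auto intro!: fint_unit fcl_unit)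

lemma subsp_unit: "range \<eta> \<subseteq> {0..1} \<Longrightarrow> subsp \<eta> G A \<in> {0..1}"
  unfolding subsp_def by (rule supI_unit) auto

lemma Kcov_unit: "R \<in> ffam G \<Longrightarrow> Kcov R G \<in> {0..1}"
  unfolding Kcov_def by (rule infI_unit) (auto intro!: supI_unit dest: ffam_unit)

lemma fsub_unit: "range R \<subseteq> {0..1} \<Longrightarrow> range \<eta> \<subseteq> {0..1} \<Longrightarrow> fsub R \<eta> G \<in> {0..1}"
  unfolding fsub_def by (rule infI_unit) (auto intro!: luk_imp_unit)

lemma FF_unit: "FF P G \<in> {0..1}"
  using infI_unit[of "{\<delta>. 0 \<le> \<delta> \<and> \<delta> \<le> 1 \<and> finite {B. B \<subseteq> G \<and> P B > \<delta>}}"]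
  unfolding FF_def by (simp add: subset_eq)

definition finite_subcover_degree :: "('a set \<Rightarrow> real) \<Rightarrow> 'a set \<Rightarrow> real" where
  "finite_subcover_degree R G =
     supI {luk_and (Kcov P G) (FF P G) | P. P \<in> ffam G \<and> (\<forall>B. P B \<le> R B)}"

lemma Gamma_eq:
  "Gamma G \<eta> = infI {luk_imp (luk_and (Kcov R G) (fsub R \<eta> G)) (finite_subcover_degree R G) | R. R \<in> ffam G}"
  by (simp add: Gamma_def finite_subcover_degree_def)

lemma finite_subcover_degree_unit: "finite_subcover_degree R G \<in> {0..1}"
  unfolding finite_subcover_degree_def
  by (rule supI_unit) (auto intro!: luk_and_unit Kcov_unit FF_unit)

lemma Gamma_unit: "range \<eta> \<subseteq> {0..1} \<Longrightarrow> Gamma G \<eta> \<in> {0..1}"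
  unfolding Gamma_eq
  by (rule infI_unit)
    (auto intro!: luk_imp_unit luk_and_unit Kcov_unit fsub_unit finite_subcover_degree_unit
      simp: ffam_def image_subset_iff)

lemma fnbhd_image:
  assumes "range \<eta>\<^sub>1 \<subseteq> {0..1}" and "range \<eta>\<^sub>2 \<subseteq> {0..1}" and "d \<le> 1"
    and "\<And>U. luk_and (\<eta>\<^sub>1 U) d \<le> \<eta>\<^sub>2 (f ` U)"
  shows "luk_and (fnbhd \<eta>\<^sub>1 x B) d \<le> fnbhd \<eta>\<^sub>2 (f x) (f ` B)"
  unfolding fnbhd_def[of \<eta>\<^sub>1]
proof (rule luk_and_supI_le)
  show "luk_and a d \<le> fnbhd \<eta>\<^sub>2 (f x) (f ` B)" if a: "a \<in> {\<eta>\<^sub>1 C | C. x \<in> C \<and> C \<subseteq> B}" for a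
  proof -
    obtain C where "a = \<eta>\<^sub>1 C" "x \<in> C" "C \<subseteq> B" using a by blast
    moreover have "\<eta>\<^sub>2 (f ` C) \<le> fnbhd \<eta>\<^sub>2 (f x) (f ` B)"
      unfolding fnbhd_def using assms(2) calculation by (intro supI_upper) blast+
    ultimately show ?thesis using assms(4)[of C] by simp
  qed
  show "0 \<le> fnbhd \<eta>\<^sub>2 (f x) (f ` B)" using fnbhd_unit[OF assms(2)] by simp
qed (use assms in auto)

lemma subsp_preimage:
  assumes "range \<eta>\<^sub>1 \<subseteq> {0..1}" and "range \<eta>\<^sub>2 \<subseteq> {0..1}" and "c \<le> 1"
    and "\<And>V. luk_and (\<eta>\<^sub>2 V) c \<le> \<eta>\<^sub>1 (f -` V)"
  shows "luk_and (subsp \<eta>\<^sub>2 (f ` B) D) c \<le> subsp \<eta>\<^sub>1 B (f -` D \<inter> B)"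
  unfolding subsp_def[of \<eta>\<^sub>2]
proof (rule luk_and_supI_le)
  show "luk_and a c \<le> subsp \<eta>\<^sub>1 B (f -` D \<inter> B)" if a: "a \<in> {\<eta>\<^sub>2 V | V. V \<inter> f ` B = D}" for a
  proof -
    obtain V where "a = \<eta>\<^sub>2 V" "V \<inter> f ` B = D" using a by blast
    moreover have "\<eta>\<^sub>1 (f -` V) \<le> subsp \<eta>\<^sub>1 B (f -` D \<inter> B)"
      unfolding subsp_def using assms(1) calculation(2) by (intro supI_upper) auto
    ultimately show ?thesis using assms(4)[of V] by simp
  qed
  show "0 \<le> subsp \<eta>\<^sub>1 B (f -` D \<inter> B)" using subsp_unit[OF assms(1)] by simp
qed (use assms in auto)

lemma inj_on_preimage_Pow_image: "inj_on (\<lambda>D. f -` D \<inter> B) (Pow (f ` B))"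
proof (rule inj_onI)
  fix D D' assume "D \<in> Pow (f ` B)" "D' \<in> Pow (f ` B)" "f -` D \<inter> B = f -` D' \<inter> B"
  then have "f ` (f -` D \<inter> B) = f ` (f -` D' \<inter> B)" "D \<subseteq> f ` B" "D' \<subseteq> f ` B" by auto
  moreover have "f ` (f -` E \<inter> B) = E" if "E \<subseteq> f ` B" for E using that by auto
  ultimately show "D = D'" by metis
qed

definition pullback_family :: "('a \<Rightarrow> 'b) \<Rightarrow> 'a set \<Rightarrow> ('b set \<Rightarrow> real) \<Rightarrow> 'a set \<Rightarrow> real" where
  "pullback_family f B R A = supI {R D | D. f -` D \<inter> B = A}"

text \<open>Truncating by R keeps the pushforward below R, as a subcover of R must be.\<close>

definition pushforward_family ::
    "('a \<Rightarrow> 'b) \<Rightarrow> 'a set \<Rightarrow> ('b set \<Rightarrow> real) \<Rightarrow> ('a set \<Rightarrow> real) \<Rightarrow> 'b set \<Rightarrow> real" where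
  "pushforward_family f B R P D = (if D \<subseteq> f ` B then min (R D) (P (f -` D \<inter> B)) else 0)"

lemma pullback_family_in_ffam:
  assumes "range R \<subseteq> {0..1}"
  shows "pullback_family f B R \<in> ffam B"
proof -
  have "pullback_family f B R A \<in> {0..1}" for A
    unfolding pullback_family_def using assms by (intro supI_unit) auto
  moreover have "pullback_family f B R A = 0" if "\<not> A \<subseteq> B" for A
    using that by (auto simp: pullback_family_def supI_def)
  ultimately show ?thesis by (simp add: ffam_def)
qed

lemma pullback_family_upper: "range R \<subseteq> {0..1} \<Longrightarrow> R D \<le> pullback_family f B R (f -` D \<inter> B)"
  unfolding pullback_family_def by (rule supI_upper) auto

lemma Kcov_le_Kcov_pullback:
  assumes R: "R \<in> ffam (f ` B)"
  shows "Kcov R (f ` B) \<le> Kcov (pullback_family f B R) B"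
  unfolding Kcov_def[of "pullback_family f B R"]
proof (rule infI_greatest)
  have R_unit: "range R \<subseteq> {0..1}" using R by (auto simp: ffam_def)
  show "Kcov R (f ` B) \<le> 1" using Kcov_unit[OF R] by simp
  fix t assume "t \<in> (\<lambda>x. supI {pullback_family f B R A | A. A \<subseteq> B \<and> x \<in> A}) ` B"
  then obtain x where x: "x \<in> B" and t: "t = supI {pullback_family f B R A | A. A \<subseteq> B \<and> x \<in> A}"
    by blast
  have "Kcov R (f ` B) \<le> supI {R D | D. D \<subseteq> f ` B \<and> f x \<in> D}"
    unfolding Kcov_def using x R_unit
    by (intro infI_lower) (auto intro!: supI_unit)
  also have "\<dots> \<le> t"
    unfolding t
  proof (rule supI_mono)
    show "{pullback_family f B R A | A. A \<subseteq> B \<and> x \<in> A} \<subseteq> {0..1}"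
      using ffam_unit[OF pullback_family_in_ffam[OF R_unit]] by blast
    fix r assume "r \<in> {R D | D. D \<subseteq> f ` B \<and> f x \<in> D}"
    then obtain D where "r = R D" "f x \<in> D" by blast
    then show "\<exists>t\<in>{pullback_family f B R A | A. A \<subseteq> B \<and> x \<in> A}. r \<le> t"
      using x pullback_family_upper[OF R_unit, of D f B] by blast
  qed
  finally show "Kcov R (f ` B) \<le> t" .
qed

lemma fsub_le_fsub_pullback:
  assumes R: "R \<in> ffam (f ` B)" and \<eta>\<^sub>1: "range \<eta>\<^sub>1 \<subseteq> {0..1}" and \<eta>\<^sub>2: "range \<eta>\<^sub>2 \<subseteq> {0..1}"
    and c: "c \<in> {0..1}" and transfer: "\<And>V. luk_and (\<eta>\<^sub>2 V) c \<le> \<eta>\<^sub>1 (f -` V)"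
  shows "luk_and (fsub R (subsp \<eta>\<^sub>2 (f ` B)) (f ` B)) c
           \<le> fsub (pullback_family f B R) (subsp \<eta>\<^sub>1 B) B"
proof -
  let ?s = "fsub R (subsp \<eta>\<^sub>2 (f ` B)) (f ` B)"
  have R_unit: "range R \<subseteq> {0..1}" using R by (auto simp: ffam_def)
  have s_unit: "?s \<in> {0..1}" using fsub_unit[OF R_unit] subsp_unit[OF \<eta>\<^sub>2] by blast
  have sc_unit: "luk_and ?s c \<in> {0..1}" using luk_and_unit[OF s_unit c] .
  have subsp_\<eta>\<^sub>1: "subsp \<eta>\<^sub>1 B A \<in> {0..1}" for A using subsp_unit[OF \<eta>\<^sub>1] .
  have "luk_and (pullback_family f B R A) (luk_and ?s c) \<le> subsp \<eta>\<^sub>1 B A" for A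
    unfolding pullback_family_def
  proof (rule luk_and_supI_le)
    fix r assume "r \<in> {R D | D. f -` D \<inter> B = A}"
    then obtain D where r: "r = R D" and A: "A = f -` D \<inter> B" by blast
    show "luk_and r (luk_and ?s c) \<le> subsp \<eta>\<^sub>1 B A"
    proof (cases "D \<subseteq> f ` B")
      case True
      have "?s \<le> luk_imp (R D) (subsp \<eta>\<^sub>2 (f ` B) D)"
        unfolding fsub_def using True R_unit subsp_unit[OF \<eta>\<^sub>2]
        by (intro infI_lower) (auto intro!: luk_imp_unit)
      then have "luk_and (R D) ?s \<le> subsp \<eta>\<^sub>2 (f ` B) D"
        using R_unit subsp_unit[OF \<eta>\<^sub>2] s_unit by (auto simp: luk_and_def luk_imp_def)
      then have "luk_and (luk_and (R D) ?s) c \<le> luk_and (subsp \<eta>\<^sub>2 (f ` B) D) c"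
        by (rule luk_and_mono) simp
      also have "\<dots> \<le> subsp \<eta>\<^sub>1 B A"
        unfolding A using subsp_preimage[OF \<eta>\<^sub>1 \<eta>\<^sub>2 _ transfer] c by simp
      finally show ?thesis
        using R_unit c by (simp add: r luk_and_assoc subset_eq)
    qed (use r ffam_outside[OF R] subsp_\<eta>\<^sub>1 sc_unit in \<open>simp add: luk_and_def\<close>)
  qed (use R_unit subsp_\<eta>\<^sub>1 sc_unit in auto)
  then have "luk_and (luk_and ?s c) (pullback_family f B R A) \<le> subsp \<eta>\<^sub>1 B A" for A
    by (metis luk_and_commute)
  then have "luk_and ?s c \<le> luk_imp (pullback_family f B R A) (subsp \<eta>\<^sub>1 B A)" for A
    using sc_unit subsp_\<eta>\<^sub>1 by (simp add: luk_and_le_iff_le_luk_imp)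
  then show ?thesis
    unfolding fsub_def[of "pullback_family f B R"] using sc_unit by (intro infI_greatest) auto
qed

lemma pushforward_family_in_ffam:
  "R \<in> ffam (f ` B) \<Longrightarrow> P \<in> ffam B \<Longrightarrow> pushforward_family f B R P \<in> ffam (f ` B)"
  by (auto simp: ffam_def pushforward_family_def min_def)

lemma pushforward_family_le: "R \<in> ffam (f ` B) \<Longrightarrow> pushforward_family f B R P D \<le> R D"
  by (auto simp: ffam_def pushforward_family_def)

lemma Kcov_le_Kcov_pushforward:
  assumes R: "R \<in> ffam (f ` B)" and P: "P \<in> ffam B"
    and below: "\<And>A. P A \<le> pullback_family f B R A"
  shows "Kcov P B \<le> Kcov (pushforward_family f B R P) (f ` B)"
  unfolding Kcov_def[of "pushforward_family f B R P"]
proof (rule infI_greatest)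
  let ?Q = "pushforward_family f B R P"
  have Q_unit: "?Q D \<in> {0..1}" for D using ffam_unit[OF pushforward_family_in_ffam[OF R P]] .
  show "Kcov P B \<le> 1" using Kcov_unit[OF P] by simp
  fix t assume "t \<in> (\<lambda>y. supI {?Q D | D. D \<subseteq> f ` B \<and> y \<in> D}) ` f ` B"
  then obtain x where x: "x \<in> B" and t: "t = supI {?Q D | D. D \<subseteq> f ` B \<and> f x \<in> D}"
    by blast
  have t_unit: "t \<in> {0..1}" unfolding t using Q_unit by (intro supI_unit) auto
  have "Kcov P B \<le> supI {P A | A. A \<subseteq> B \<and> x \<in> A}"
    unfolding Kcov_def using x ffam_unit[OF P] by (intro infI_lower) (auto intro!: supI_unit)
  also have "\<dots> \<le> t"
  proof (rule supI_least)
    fix p assume "p \<in> {P A | A. A \<subseteq> B \<and> x \<in> A}"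
    then obtain A where p: "p = P A" and "x \<in> A" by blast
    show "p \<le> t"
    proof (rule ccontr)
      assume "\<not> p \<le> t"
      then have "\<not> pullback_family f B R A \<le> t" using below[of A] p by linarith
      then obtain D where D: "f -` D \<inter> B = A" and "\<not> R D \<le> t"
        using t_unit unfolding pullback_family_def by (auto intro: supI_least)
      moreover have "D \<subseteq> f ` B" using ffam_outside[OF R] calculation t_unit by force
      moreover have "?Q D \<le> t"
        unfolding t using Q_unit \<open>x \<in> A\<close> calculation by (intro supI_upper) auto
      ultimately show False using \<open>\<not> p \<le> t\<close> p by (simp add: pushforward_family_def)
    qed
  qed (use t_unit in simp)
  finally show "Kcov P B \<le> t" .
qed

lemma FF_le_FF_pushforward: "FF P B \<le> FF (pushforward_family f B R P) (f ` B)"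
proof -
  let ?Q = "pushforward_family f B R P"
  let ?\<Delta>\<^sub>P = "{\<delta>. 0 \<le> \<delta> \<and> \<delta> \<le> 1 \<and> finite {A. A \<subseteq> B \<and> P A > \<delta>}}"
  let ?\<Delta>\<^sub>Q = "{\<delta>. 0 \<le> \<delta> \<and> \<delta> \<le> 1 \<and> finite {D. D \<subseteq> f ` B \<and> ?Q D > \<delta>}}"
  have "finite {D. D \<subseteq> f ` B \<and> ?Q D > \<delta>}" if "finite {A. A \<subseteq> B \<and> P A > \<delta>}" for \<delta>
  proof (rule finite_imageD)
    have "(\<lambda>D. f -` D \<inter> B) ` {D. D \<subseteq> f ` B \<and> ?Q D > \<delta>} \<subseteq> {A. A \<subseteq> B \<and> P A > \<delta>}"
      by (auto simp: pushforward_family_def)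
    then show "finite ((\<lambda>D. f -` D \<inter> B) ` {D. D \<subseteq> f ` B \<and> ?Q D > \<delta>})"
      using that finite_subset by blast
    show "inj_on (\<lambda>D. f -` D \<inter> B) {D. D \<subseteq> f ` B \<and> ?Q D > \<delta>}"
      by (rule inj_on_subset[OF inj_on_preimage_Pow_image]) auto
  qed
  then have sub: "?\<Delta>\<^sub>P \<subseteq> ?\<Delta>\<^sub>Q" by (intro Collect_mono) blast
  have \<Delta>\<^sub>Q: "?\<Delta>\<^sub>Q \<subseteq> {0..1}" by auto
  have "infI ?\<Delta>\<^sub>Q \<le> infI ?\<Delta>\<^sub>P"
  proof (rule infI_greatest)
    show "infI ?\<Delta>\<^sub>Q \<le> \<delta>" if "\<delta> \<in> ?\<Delta>\<^sub>P" for \<delta>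
      using sub that \<Delta>\<^sub>Q by (simp add: infI_lower subset_iff)
    show "infI ?\<Delta>\<^sub>Q \<le> 1" using infI_unit[OF \<Delta>\<^sub>Q] by simp
  qed
  then show ?thesis unfolding FF_def by linarith
qed

lemma finite_subcover_degree_pullback_le:
  assumes R: "R \<in> ffam (f ` B)"
  shows "finite_subcover_degree (pullback_family f B R) B \<le> finite_subcover_degree R (f ` B)"
  unfolding finite_subcover_degree_def
proof (rule supI_mono)
  fix s assume "s \<in> {luk_and (Kcov P B) (FF P B) | P. P \<in> ffam B \<and> (\<forall>A. P A \<le> pullback_family f B R A)}"
  then obtain P where P: "P \<in> ffam B" "\<And>A. P A \<le> pullback_family f B R A"
    and s: "s = luk_and (Kcov P B) (FF P B)" by blast
  let ?Q = "pushforward_family f B R P"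
  have "s \<le> luk_and (Kcov ?Q (f ` B)) (FF ?Q (f ` B))"
    unfolding s using Kcov_le_Kcov_pushforward[OF R P] FF_le_FF_pushforward
    by (rule luk_and_mono)
  then show "\<exists>t\<in>{luk_and (Kcov Q (f ` B)) (FF Q (f ` B)) | Q. Q \<in> ffam (f ` B) \<and> (\<forall>D. Q D \<le> R D)}. s \<le> t"
    using pushforward_family_in_ffam[OF R P(1)] pushforward_family_le[OF R] by blast
qed (auto intro!: luk_and_unit Kcov_unit FF_unit)

lemma Gamma_image:
  assumes \<eta>\<^sub>1: "range \<eta>\<^sub>1 \<subseteq> {0..1}" and \<eta>\<^sub>2: "range \<eta>\<^sub>2 \<subseteq> {0..1}"
    and c: "c \<in> {0..1}" and transfer: "\<And>V. luk_and (\<eta>\<^sub>2 V) c \<le> \<eta>\<^sub>1 (f -` V)"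
  shows "luk_and (Gamma B (subsp \<eta>\<^sub>1 B)) c \<le> Gamma (f ` B) (subsp \<eta>\<^sub>2 (f ` B))"
proof -
  let ?g = "Gamma B (subsp \<eta>\<^sub>1 B)"
  have g: "?g \<in> {0..1}" using Gamma_unit subsp_unit[OF \<eta>\<^sub>1] by blast
  have "luk_and ?g c \<le> luk_imp (luk_and (Kcov R (f ` B)) (fsub R (subsp \<eta>\<^sub>2 (f ` B)) (f ` B)))
                                (finite_subcover_degree R (f ` B))"
    if R: "R \<in> ffam (f ` B)" for R
  proof -
    let ?R' = "pullback_family f B R"
    have R_unit: "range R \<subseteq> {0..1}" using R by (auto simp: ffam_def)
    have R': "?R' \<in> ffam B" using pullback_family_in_ffam[OF R_unit] .
    have "?g \<le> luk_imp (luk_and (Kcov ?R' B) (fsub ?R' (subsp \<eta>\<^sub>1 B) B)) (finite_subcover_degree ?R' B)"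
      unfolding Gamma_eq using R' subsp_unit[OF \<eta>\<^sub>1]
      by (intro infI_lower) (auto intro!: luk_imp_unit luk_and_unit Kcov_unit fsub_unit
          finite_subcover_degree_unit simp: ffam_def image_subset_iff)
    moreover have "Kcov R (f ` B) \<le> Kcov ?R' B" using Kcov_le_Kcov_pullback[OF R] .
    moreover have "luk_and (fsub R (subsp \<eta>\<^sub>2 (f ` B)) (f ` B)) c \<le> fsub ?R' (subsp \<eta>\<^sub>1 B) B"
      using fsub_le_fsub_pullback[OF R \<eta>\<^sub>1 \<eta>\<^sub>2 c transfer] .
    moreover have "finite_subcover_degree ?R' B \<le> finite_subcover_degree R (f ` B)"
      using finite_subcover_degree_pullback_le[OF R] .
    moreover have "fsub R (subsp \<eta>\<^sub>2 (f ` B)) (f ` B) \<in> {0..1}"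
      using fsub_unit[OF R_unit] subsp_unit[OF \<eta>\<^sub>2] by blast
    ultimately show ?thesis
      using g c Kcov_unit[OF R] finite_subcover_degree_unit[of R "f ` B"]
      by (simp add: luk_and_le_luk_imp_mono)
  qed
  then show ?thesis
    unfolding Gamma_eq[of "f ` B"] using g c by (intro infI_greatest) (auto simp: luk_and_def)
qed

definition local_compactness_at :: "('a set \<Rightarrow> real) \<Rightarrow> 'a \<Rightarrow> real" where
  "local_compactness_at \<eta> x = supI {luk_and (fnbhd \<eta> x B) (Gamma B (subsp \<eta> B)) | B. True}"

lemma LPC_eq_infI_local_compactness_at:
  "LPC \<tau> = infI (range (local_compactness_at (preopen \<tau>)))"
  by (simp add: LPC_def local_compactness_at_def pnbhd_def fnbhd_def)

lemma range_local_compactness_at: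
  assumes "range \<eta> \<subseteq> {0..1}"
  shows "range (local_compactness_at \<eta>) \<subseteq> {0..1}"
proof -
  have "local_compactness_at \<eta> x \<in> {0..1}" for x
    unfolding local_compactness_at_def using assms
    by (intro supI_unit) (auto intro!: luk_and_unit fnbhd_unit Gamma_unit subsp_unit)
  then show ?thesis by blast
qed

lemma local_compactness_at_image:
  assumes \<eta>\<^sub>1: "range \<eta>\<^sub>1 \<subseteq> {0..1}" and \<eta>\<^sub>2: "range \<eta>\<^sub>2 \<subseteq> {0..1}"
    and c: "c \<in> {0..1}" and d: "d \<in> {0..1}"
    and preimage: "\<And>V. luk_and (\<eta>\<^sub>2 V) c \<le> \<eta>\<^sub>1 (f -` V)"
    and image: "\<And>U. luk_and (\<eta>\<^sub>1 U) d \<le> \<eta>\<^sub>2 (f ` U)"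
  shows "luk_and (local_compactness_at \<eta>\<^sub>1 x) (luk_and c d) \<le> local_compactness_at \<eta>\<^sub>2 (f x)"
  unfolding local_compactness_at_def[of \<eta>\<^sub>1]
proof (rule luk_and_supI_le)
  fix a assume "a \<in> {luk_and (fnbhd \<eta>\<^sub>1 x B) (Gamma B (subsp \<eta>\<^sub>1 B)) | B. True}"
  then obtain B where a: "a = luk_and (fnbhd \<eta>\<^sub>1 x B) (Gamma B (subsp \<eta>\<^sub>1 B))" by blast
  let ?N = "fnbhd \<eta>\<^sub>2 (f x) (f ` B)" and ?G = "Gamma (f ` B) (subsp \<eta>\<^sub>2 (f ` B))"
  have "luk_and (fnbhd \<eta>\<^sub>1 x B) d \<le> ?N" using fnbhd_image[OF \<eta>\<^sub>1 \<eta>\<^sub>2 _ image] d by simp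
  moreover have "luk_and (Gamma B (subsp \<eta>\<^sub>1 B)) c \<le> ?G" using Gamma_image[OF \<eta>\<^sub>1 \<eta>\<^sub>2 c preimage] .
  moreover have "fnbhd \<eta>\<^sub>1 x B \<in> {0..1}" "Gamma B (subsp \<eta>\<^sub>1 B) \<in> {0..1}"
    using fnbhd_unit[OF \<eta>\<^sub>1] Gamma_unit subsp_unit[OF \<eta>\<^sub>1] by blast+
  ultimately have "luk_and a (luk_and c d) \<le> luk_and ?N ?G"
    unfolding a using c d by (simp add: luk_and_interchange_le)
  also have "\<dots> \<le> local_compactness_at \<eta>\<^sub>2 (f x)"
    unfolding local_compactness_at_def
    by (rule supI_upper) (auto intro!: luk_and_unit fnbhd_unit Gamma_unit subsp_unit \<eta>\<^sub>2)
  finally show "luk_and a (luk_and c d) \<le> local_compactness_at \<eta>\<^sub>2 (f x)" .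
qed (use subsetD[OF range_local_compactness_at[OF \<eta>\<^sub>2] rangeI] luk_and_unit[OF c d] in
  \<open>auto intro!: luk_and_unit fnbhd_unit Gamma_unit subsp_unit \<eta>\<^sub>1\<close>)

lemma infI_local_compactness_at_image:
  assumes \<eta>\<^sub>1: "range \<eta>\<^sub>1 \<subseteq> {0..1}" and \<eta>\<^sub>2: "range \<eta>\<^sub>2 \<subseteq> {0..1}" and "surj f"
    and c: "c \<in> {0..1}" and d: "d \<in> {0..1}"
    and preimage: "\<And>V. luk_and (\<eta>\<^sub>2 V) c \<le> \<eta>\<^sub>1 (f -` V)"
    and image: "\<And>U. luk_and (\<eta>\<^sub>1 U) d \<le> \<eta>\<^sub>2 (f ` U)"
  shows "luk_and (luk_and (infI (range (local_compactness_at \<eta>\<^sub>1))) c) d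
           \<le> infI (range (local_compactness_at \<eta>\<^sub>2))"
proof -
  let ?L = "infI (range (local_compactness_at \<eta>\<^sub>1))"
  have L: "?L \<in> {0..1}" using infI_unit[OF range_local_compactness_at[OF \<eta>\<^sub>1]] .
  have "luk_and (luk_and ?L c) d \<le> t" if t_range: "t \<in> range (local_compactness_at \<eta>\<^sub>2)" for t
  proof -
    obtain x where t: "t = local_compactness_at \<eta>\<^sub>2 (f x)" using t_range \<open>surj f\<close> by (metis rangeE surjD)
    have "?L \<le> local_compactness_at \<eta>\<^sub>1 x"
      using range_local_compactness_at[OF \<eta>\<^sub>1] by (rule infI_lower[OF rangeI])
    then have "luk_and (luk_and ?L c) d \<le> luk_and (local_compactness_at \<eta>\<^sub>1 x) (luk_and c d)"
      using L d by (simp add: luk_and_assoc luk_and_mono)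
    also have "\<dots> \<le> t" unfolding t using local_compactness_at_image[OF \<eta>\<^sub>1 \<eta>\<^sub>2 c d preimage image] .
    finally show ?thesis .
  qed
  then show ?thesis using luk_and_unit[OF luk_and_unit[OF L c] d] by (intro infI_greatest) auto
qed

theorem theorem4p7:
  fixes \<tau> :: "'a set \<Rightarrow> real" and \<sigma> :: "'b set \<Rightarrow> real" and f :: "'a \<Rightarrow> 'b"
  assumes "fuzzifying_topology \<tau>" and "fuzzifying_topology \<sigma>" and "surj f"
  shows "luk_and (luk_and (LPC \<tau>) (pre_irresolute \<tau> \<sigma> f)) (pre_open_map \<tau> \<sigma> f) \<le> LPC \<sigma>"
proof -
  have \<tau>\<^sub>P: "range (preopen \<tau>) \<subseteq> {0..1}" and \<sigma>\<^sub>P: "range (preopen \<sigma>) \<subseteq> {0..1}"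
    using assms(1,2) by (auto intro!: preopen_unit simp: fuzzifying_topology_def)
  have unit: "preopen \<tau> A \<in> {0..1}" "preopen \<sigma> V \<in> {0..1}" for A V
    using \<tau>\<^sub>P \<sigma>\<^sub>P by blast+
  show ?thesis
    unfolding LPC_eq_infI_local_compactness_at
  proof (rule infI_local_compactness_at_image[OF \<tau>\<^sub>P \<sigma>\<^sub>P \<open>surj f\<close>])
    show "pre_irresolute \<tau> \<sigma> f \<in> {0..1}"
      unfolding pre_irresolute_def by (intro infI_luk_imp_unit unit)
    show "pre_open_map \<tau> \<sigma> f \<in> {0..1}"
      unfolding pre_open_map_def by (intro infI_luk_imp_unit unit)
    show "luk_and (preopen \<sigma> V) (pre_irresolute \<tau> \<sigma> f) \<le> preopen \<tau> (f -` V)" for V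
      unfolding pre_irresolute_def by (intro luk_and_infI_luk_imp_le unit)
    show "luk_and (preopen \<tau> U) (pre_open_map \<tau> \<sigma> f) \<le> preopen \<sigma> (f ` U)" for U
      unfolding pre_open_map_def by (intro luk_and_infI_luk_imp_le unit)
  qed
qed

end
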